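(* Let $n\ge 0$, $N=2n+1$, and let $(\mathcal X'_k)_{0\le k\le n}$ be the skeleton chain of the ternary coalescent started from the monodisperse configuration $(1,\dots,1)$ consisting of $N$ particles of mass $1$. Then the time-reversed chain $(\mathcal X'_{n-k})_{0\le k\le n}$ (which starts from the single particle $(N)$) is a Markov chain whose transition from time $l$ to time $l+1$ ($0\le l\le n-1$) is as follows: conditionally on the current state $\mathbf s=(s_1,\dots,s_{2l+1})$, (a) select an index $\iota\in\{1,\dots,2l+1\}$ with $\mathbb P(\iota=i)=\frac{s_i-1}{2(n-l)}$; (b) given $\iota=i$, split $s_i$ into three numbers according to the law $\mu_{s_i}$ and rank these three numbers together with the $s_m$, $m\ne i$, in decreasing order to obtain the next state. In particular, the reversed chain is the state chain of a ternary fragmentation process (particles split independently into three pieces, with rate and dislocation law depending only on the particle size).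
   Context: Let $\mathcal S^\downarrow$ be the set of nonincreasing sequences $s_1\ge s_2\ge\dots\ge 0$ with only finitely many nonzero terms; a sequence is identified with its nonzero entries ("particles"). For $\mathbf s\in\mathcal S^\downarrow$ and indices $i<j<k$ of nonzero entries, $\mathbf s^{i\oplus j\oplus k}$ denotes the sequence obtained by removing $s_i,s_j,s_k$ and inserting $s_i+s_j+s_k$, then reranking decreasingly. The ternary coalescent is the continuous-time Markov jump process on $\mathcal S^\downarrow$ with jump rates $q(\mathbf s,\cdot)=\sum_{1\le i<j<k,\ s_k>0}(s_i+s_j+s_k+3)\,\delta_{\mathbf s^{i\oplus j\oplus k}}$. Started from $N=2n+1$ particles, it makes exactly $n$ jumps; with $T_0=0$ and $T_k$ the time of the $k$-th coagulation, the skeleton chain is $\mathcal X'_k=\mathcal X(T_k)$, $0\le k\le n$. Let $H_{-1}=\inf\{m\ge1: S_m=-1\}$ be the first hitting time of $-1$ by simple symmetric random walk $S$ on $\mathbb Z$ started at $0$, and let $\xi_1,\xi_2,\xi_3$ be independent copies of $H_{-1}$. For odd $s\ge3$, $\mu_s$ is the probability law on multisets $\{\{r_1,r_2,r_3\}\}$ of odd positive integers with $r_1+r_2+r_3=s$ given by $\mu_s(R)=\mathbb P(\{\{\xi_1,\xi_2,\xi_3\}\}=R\mid \xi_1+\xi_2+\xi_3=s)$. *)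

theory Defs
  imports Complex_Main "HOL-Library.Multiset"
begin

text \<open>The event {H_{-1} = m} depends only on the first m steps, so
  P(H_{-1} = m) = #(step lists of length m first hitting -1 at time m) / 2^m.\<close>

definition walk_step :: "bool \<Rightarrow> int" where
  "walk_step b = (if b then 1 else -1)"

definition walk :: "bool list \<Rightarrow> nat \<Rightarrow> int" where
  "walk w k = (\<Sum>i<k. walk_step (w ! i))"

definition first_hits_minus_one_at :: "bool list \<Rightarrow> nat \<Rightarrow> bool" where
  "first_hits_minus_one_at w m \<longleftrightarrow>
     1 \<le> m \<and> walk w m = -1 \<and> (\<forall>k. 1 \<le> k \<and> k < m \<longrightarrow> walk w k \<noteq> -1)"

definition hit_prob :: "nat \<Rightarrow> real" where
  "hit_prob m = real (card {w. length w = m \<and> first_hits_minus_one_at w m}) / 2 ^ m"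

text \<open>mu s R = P({{xi1,xi2,xi3}} = R | xi1+xi2+xi3 = s), xi_i iid copies of H_{-1}.\<close>

definition mu :: "nat \<Rightarrow> nat multiset \<Rightarrow> real" where
  "mu s R =
     (\<Sum>(a,b,c) \<in> {(a,b,c). a \<le> s \<and> b \<le> s \<and> c \<le> s \<and> a + b + c = s \<and> mset [a,b,c] = R}.
        hit_prob a * hit_prob b * hit_prob c)
   / (\<Sum>(a,b,c) \<in> {(a,b,c). a \<le> s \<and> b \<le> s \<and> c \<le> s \<and> a + b + c = s}.
        hit_prob a * hit_prob b * hit_prob c)"

text \<open>A state (element of S-down, identified with its nonzero entries) is a finite
  multiset of positive masses; its ranked (nonincreasing) list is:\<close>

definition ranked :: "nat multiset \<Rightarrow> nat list" where
  "ranked M = rev (sorted_list_of_multiset M)"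

definition coalesce :: "nat list \<Rightarrow> nat \<Rightarrow> nat \<Rightarrow> nat \<Rightarrow> nat multiset" where
  "coalesce xs i j k = mset xs - {#xs ! i, xs ! j, xs ! k#} + {#xs ! i + xs ! j + xs ! k#}"

definition coal_rate :: "nat multiset \<Rightarrow> nat multiset \<Rightarrow> real" where
  "coal_rate M M' = (let xs = ranked M in
     \<Sum>(i,j,k) \<in> {(i,j,k). i < j \<and> j < k \<and> k < size M \<and> coalesce xs i j k = M'}.
        real (xs ! i + xs ! j + xs ! k + 3))"

definition coal_total_rate :: "nat multiset \<Rightarrow> real" where
  "coal_total_rate M = (let xs = ranked M in
     \<Sum>(i,j,k) \<in> {(i,j,k). i < j \<and> j < k \<and> k < size M}. real (xs ! i + xs ! j + xs ! k + 3))"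

definition coal_kernel :: "nat multiset \<Rightarrow> nat multiset \<Rightarrow> real" where
  "coal_kernel M M' = coal_rate M M' / coal_total_rate M"

definition frag_kernel :: "nat \<Rightarrow> nat \<Rightarrow> nat multiset \<Rightarrow> nat multiset \<Rightarrow> real" where
  "frag_kernel n l M M' = (let ys = ranked M in
     \<Sum>i < size M. ((real (ys ! i) - 1) / (2 * real (n - l))) *
        (\<Sum>R \<in> {R. M - {#ys ! i#} + R = M'}. mu (ys ! i) R))"

definition point_mass :: "'a \<Rightarrow> 'a \<Rightarrow> real" where
  "point_mass a x = (if x = a then 1 else 0)"

definition markov_path_prob ::
  "('a \<Rightarrow> real) \<Rightarrow> (nat \<Rightarrow> 'a \<Rightarrow> 'a \<Rightarrow> real) \<Rightarrow> 'a list \<Rightarrow> real" where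
  "markov_path_prob p0 K xs = p0 (xs ! 0) * (\<Prod>k < length xs - 1. K k (xs ! k) (xs ! Suc k))"

end

theory Submission
  imports Defs
begin

text \<open>Both sides are products of transition probabilities along the same path, so it suffices to
  find weights \<open>w\<^sub>k\<close> with \<open>w\<^sub>0 = \<delta>\<^sub>(\<^sub>1\<^sub>,\<^sub>\<dots>\<^sub>,\<^sub>1\<^sub>)\<close>, \<open>w\<^sub>n = \<delta>\<^sub>(\<^sub>N\<^sub>)\<close> and detailed balance
  \<open>w\<^sub>k(s) K(s, s') = w\<^sub>k\<^sub>+\<^sub>1(s') F\<^sub>n\<^sub>-\<^sub>k\<^sub>-\<^sub>1(s', s)\<close>; the path probabilities then telescope.
  The weight is \<open>w\<^sub>k(s) = c\<^sub>k \<Prod>\<^sub>i P(H\<^sub>-\<^sub>1 = s\<^sub>i) / \<Prod>\<^sub>v (mult\<^sub>v s)!\<close> on states with \<open>2(n - k) + 1\<close>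
  odd parts. When \<open>a, b, c\<close> merge into \<open>y\<close>, the coalescence side carries the rate \<open>y + 3\<close> times
  the number of index triples holding \<open>a, b, c\<close>, the fragmentation side the weight \<open>y - 1\<close>
  times \<open>\<mu>\<^sub>y\<close>, whose normalisation is \<open>P(\<xi>\<^sub>1 + \<xi>\<^sub>2 + \<xi>\<^sub>3 = y)\<close>. The two agree because the
  hitting time theorem \<open>P(H\<^sub>-\<^sub>d = m) = (d/m) P(S\<^sub>m = -d)\<close> gives
  \<open>(y + 3) P(\<xi>\<^sub>1 + \<xi>\<^sub>2 + \<xi>\<^sub>3 = y) = 3 (y - 1) P(H\<^sub>-\<^sub>1 = y)\<close>, and because double counting
  the ordered index triples relates the number of index triples to the multiplicity factorials.\<close>

section \<open>First passages of the simple random walk\<close>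

fun first_passage :: "nat \<Rightarrow> bool list \<Rightarrow> bool" where
  "first_passage d [] \<longleftrightarrow> d = 0"
| "first_passage 0 (b # w) \<longleftrightarrow> False"
| "first_passage (Suc d) (b # w) \<longleftrightarrow> first_passage (if b then Suc (Suc d) else d) w"

fun first_passages :: "nat \<Rightarrow> nat \<Rightarrow> nat" where
  "first_passages d 0 = (if d = 0 then 1 else 0)"
| "first_passages 0 (Suc m) = 0"
| "first_passages (Suc d) (Suc m) = first_passages (Suc (Suc d)) m + first_passages d m"

lemma walk_0 [simp]: "walk w 0 = 0"
  by (simp add: walk_def)

lemma walk_Cons_Suc: "walk (b # w) (Suc k) = walk_step b + walk w k"
  unfolding walk_def sum.lessThan_Suc_shift by simp

lemma first_passage_iff_walk:
  "first_passage d w \<longleftrightarrow> walk w (length w) = - int d \<and> (\<forall>k<length w. walk w k \<noteq> - int d)"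
proof (induction w arbitrary: d)
  case (Cons b w)
  then show ?case
    by (cases d) (auto simp: walk_Cons_Suc walk_step_def All_less_Suc2)
qed simp

lemma first_hits_minus_one_at_iff_first_passage:
  assumes "length w = m"
  shows "first_hits_minus_one_at w m \<longleftrightarrow> first_passage 1 w"
  using assms unfolding first_hits_minus_one_at_def first_passage_iff_walk
  by (metis One_nat_def int_ops(2) less_one linorder_not_le walk_0 zero_neq_neg_one)

lemma card_first_passage: "card {w. length w = m \<and> first_passage d w} = first_passages d m"
proof (induction m arbitrary: d)
  case 0
  have "{w. length w = 0 \<and> first_passage d w} = (if d = 0 then {[]} else {})" by auto
  then show ?case by simp
next
  case (Suc m)
  show ?case
  proof (cases d)
    case 0
    then have "{w. length w = Suc m \<and> first_passage d w} = {}" by (auto simp: length_Suc_conv)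
    then show ?thesis using 0 by (simp only: card.empty first_passages.simps)
  next
    case (Suc d')
    let ?A = "{w. length w = m \<and> first_passage (Suc (Suc d')) w}"
    let ?B = "{w. length w = m \<and> first_passage d' w}"
    have split: "{w. length w = Suc m \<and> first_passage d w} = Cons True ` ?A \<union> Cons False ` ?B"
      using Suc by (auto simp: length_Suc_conv image_iff split: if_splits)
    have "finite ?A" "finite ?B"
      using finite_lists_length_eq[of "UNIV :: bool set" m] by (auto intro: rev_finite_subset)
    then have "card (Cons True ` ?A \<union> Cons False ` ?B) = card ?A + card ?B"
      by (subst card_Un_disjoint) (auto simp: card_image)
    then show ?thesis
      unfolding split using Suc Suc.IH by simp
  qed
qed

lemma hit_prob_eq: "hit_prob m = first_passages 1 m / 2 ^ m"
proof -
  have "{w. length w = m \<and> first_hits_minus_one_at w m} = {w. length w = m \<and> first_passage 1 w}"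
    using first_hits_minus_one_at_iff_first_passage by blast
  then show ?thesis by (simp add: hit_prob_def card_first_passage)
qed

text \<open>A first passage from height \<open>d + e\<close> is a first passage down to height \<open>e\<close> followed by
  one from there.\<close>

lemma first_passages_add:
  "first_passages (d + e) m = (\<Sum>a\<le>m. first_passages d a * first_passages e (m - a))"
proof (induction m arbitrary: d)
  case 0
  then show ?case by (cases d) auto
next
  case (Suc m)
  show ?case
  proof (cases d)
    case 0
    have "(\<Sum>a\<le>Suc m. first_passages 0 a * first_passages e (Suc m - a))
        = (\<Sum>a\<in>{0}. first_passages 0 a * first_passages e (Suc m - a))"
      by (rule sum.mono_neutral_right) (auto simp: gr0_conv_Suc)
    then show ?thesis using 0 by simp
  next
    case (Suc d')
    have "(\<Sum>a\<le>Suc m. first_passages d a * first_passages e (Suc m - a))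
        = (\<Sum>a\<le>m. (first_passages (Suc (Suc d')) a + first_passages d' a) * first_passages e (m - a))"
      using Suc by (simp only: sum.atMost_Suc_shift) simp
    also have "\<dots> = first_passages (Suc (Suc d') + e) m + first_passages (d' + e) m"
      using Suc.IH[of "Suc (Suc d')"] Suc.IH[of d'] by (simp add: sum.distrib algebra_simps)
    finally show ?thesis using Suc by simp
  qed
qed

lemma first_passages_neq_0_imp: "first_passages d m \<noteq> 0 \<Longrightarrow> \<exists>j. m = d + 2 * j"
proof (induction d m rule: first_passages.induct)
  case (3 d m)
  then consider j where "m = Suc (Suc d) + 2 * j" | j where "m = d + 2 * j" by fastforce
  then show ?case
  proof cases
    case 1
    then show ?thesis by (intro exI[of _ "Suc j"]) simp
  qed auto
qed (auto split: if_splits)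

lemma first_passages_below: "m < d \<Longrightarrow> first_passages d m = 0"
  using first_passages_neq_0_imp by fastforce

lemma ballot_binomial_step:
  fixes d j m :: nat
  assumes m: "m = d + 2 * Suc j"
  shows "Suc m * ((d + 2) * (m choose j) + d * (m choose Suc j)) = m * (Suc d * (Suc m choose Suc j))"
proof -
  define c c' where "c = m choose j" and "c' = m choose Suc j"
  have "Suc j * c' = (m - j) * c"
    using binomial_absorption[of j m] binomial_absorb_comp[of m j] by (simp add: c_def c'_def)
  then have absorb: "Suc j * c' = (d + j + 2) * c"
    using m by (simp add: Suc_diff_le)
  have "Suc m * ((d + 2) * c + d * c') + 2 * (Suc j * c') = m * (Suc d * (c + c')) + 2 * ((d + j + 2) * c)"
    by (simp add: m algebra_simps)
  then show ?thesis unfolding absorb by (simp add: c_def c'_def)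
qed

text \<open>The hitting time theorem \<open>P(H\<^sub>-\<^sub>d = m) = (d/m) P(S\<^sub>m = -d)\<close>.\<close>

lemma first_passages_closed_form:
  "m = d + 2 * j \<Longrightarrow> m * first_passages d m = d * (m choose j)"
proof (induction m arbitrary: d j)
  case (Suc m)
  show ?case
  proof (cases d)
    case (Suc d')
    then have m: "m = d' + 2 * j" using Suc.prems by simp
    show ?thesis
    proof (cases "m = 0")
      case False
      show ?thesis
      proof (cases j)
        case 0
        then have "first_passages d' m = 1" using Suc.IH[OF m] m False by simp
        then show ?thesis using 0 m \<open>d = Suc d'\<close> by (simp add: first_passages_below)
      next
        case (Suc j')
        have "m = Suc (Suc d') + 2 * j'" using m Suc by simp
        note IH = Suc.IH[OF this] Suc.IH[OF m]
        have "m * (Suc m * first_passages d (Suc m))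
            = Suc m * ((d' + 2) * (m choose j') + d' * (m choose Suc j'))"
          using IH Suc \<open>d = Suc d'\<close> by (simp add: algebra_simps)
        also have "\<dots> = m * (d * (Suc m choose j))"
          using ballot_binomial_step[of m d' j'] m Suc \<open>d = Suc d'\<close> by simp
        finally show ?thesis using False by simp
      qed
    qed (use m Suc in simp)
  qed simp
qed simp

lemma hit_prob_neq_0_imp_odd: "hit_prob m \<noteq> 0 \<Longrightarrow> odd m"
  using first_passages_neq_0_imp[of 1 m] by (auto simp: hit_prob_eq)

lemma hit_prob_1: "hit_prob 1 = 1 / 2"
  by (simp add: hit_prob_eq)

definition hit_prob3 :: "nat \<Rightarrow> real" where
  "hit_prob3 y = (\<Sum>(a,b,c) \<in> {(a,b,c). a \<le> y \<and> b \<le> y \<and> c \<le> y \<and> a + b + c = y}.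
     hit_prob a * hit_prob b * hit_prob c)"

lemma sum_compositions3:
  fixes y :: nat
  shows "(\<Sum>(a,b,c) \<in> {(a,b,c). a \<le> y \<and> b \<le> y \<and> c \<le> y \<and> a + b + c = y}. f a b c)
   = (\<Sum>a\<le>y. \<Sum>b\<le>y - a. f a b (y - a - b))"
proof -
  let ?g = "\<lambda>(a,b). (a, b, y - a - b)"
  have "{(a,b,c). a \<le> y \<and> b \<le> y \<and> c \<le> y \<and> a + b + c = y} = ?g ` (SIGMA a:{..y}. {..y - a})"
  proof (intro equalityI subsetI)
    fix x assume "x \<in> {(a,b,c). a \<le> y \<and> b \<le> y \<and> c \<le> y \<and> a + b + c = y}"
    then obtain a b c where "x = (a, b, c)" "a + b + c = y" by auto
    then have "x = ?g (a, b)" "(a, b) \<in> (SIGMA a:{..y}. {..y - a})" by auto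
    then show "x \<in> ?g ` (SIGMA a:{..y}. {..y - a})" by blast
  qed auto
  moreover have "inj_on ?g (SIGMA a:{..y}. {..y - a})"
    by (auto simp: inj_on_def)
  ultimately show ?thesis
    by (simp add: sum.reindex sum.Sigma split_def)
qed

lemma hit_prob3_eq: "hit_prob3 y = first_passages 3 y / 2 ^ y"
proof -
  have "hit_prob3 y = (\<Sum>a\<le>y. \<Sum>b\<le>y - a. hit_prob a * hit_prob b * hit_prob (y - a - b))"
    unfolding hit_prob3_def by (rule sum_compositions3)
  also have "\<dots> = (\<Sum>a\<le>y. \<Sum>b\<le>y - a.
      real (first_passages 1 a * first_passages 1 b * first_passages 1 (y - a - b)) / 2 ^ y)"
  proof (intro sum.cong refl)
    fix a b assume "a \<in> {..y}" "b \<in> {..y - a}"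
    then have "(2::real) ^ y = 2 ^ a * 2 ^ b * 2 ^ (y - a - b)"
      by (simp flip: power_add)
    then show "hit_prob a * hit_prob b * hit_prob (y - a - b)
        = real (first_passages 1 a * first_passages 1 b * first_passages 1 (y - a - b)) / 2 ^ y"
      by (simp add: hit_prob_eq)
  qed
  also have "\<dots> = first_passages (1 + (1 + 1)) y / 2 ^ y"
    unfolding first_passages_add[of 1] sum_divide_distrib[symmetric]
    by (simp add: sum_distrib_left mult.assoc diff_diff_add)
  finally show ?thesis by (simp add: numeral_3_eq_3)
qed

lemma hit_prob3_pos:
  assumes "y = 3 + 2 * j"
  shows "hit_prob3 y > 0"
proof -
  have "y * first_passages 3 y = 3 * (y choose j)"
    using first_passages_closed_form[OF assms] .
  moreover have "y choose j > 0" using assms by simp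
  ultimately have "y * first_passages 3 y > 0" by simp
  then show ?thesis by (simp add: hit_prob3_eq)
qed

text \<open>The hitting time theorem for \<open>d = 3\<close> and \<open>d = 1\<close>; this identity is what makes the
  coalescence and fragmentation kernels balance.\<close>

lemma hit_prob3_hit_prob:
  assumes y: "y = 3 + 2 * j"
  shows "(real y + 3) * hit_prob3 y = 3 * (real y - 1) * hit_prob y"
proof -
  have fp3: "y * first_passages 3 y = 3 * (y choose j)"
    using first_passages_closed_form[OF y] .
  have fp1: "y * first_passages 1 y = y choose Suc j"
    using first_passages_closed_form[of y 1 "Suc j"] y by simp
  have absorb: "Suc j * (y choose Suc j) = (j + 3) * (y choose j)"
    using binomial_absorption[of j y] binomial_absorb_comp[of y j] y by simp
  have "y * ((y + 3) * first_passages 3 y) = 6 * ((j + 3) * (y choose j))"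
    unfolding mult.left_commute[of y] fp3 using y by simp
  also have "\<dots> = y * (3 * (y - 1) * first_passages 1 y)"
    unfolding absorb[symmetric] mult.left_commute[of y] fp1 using y by (simp add: algebra_simps)
  finally have "(y + 3) * first_passages 3 y = 3 * (y - 1) * first_passages 1 y"
    using y by simp
  then have "real ((y + 3) * first_passages 3 y) = real (3 * (y - 1) * first_passages 1 y)"
    by (simp only:)
  then have "(real y + 3) * first_passages 3 y = 3 * (real y - 1) * first_passages 1 y"
    using y by simp
  then show ?thesis by (simp add: hit_prob3_eq hit_prob_eq)
qed

section \<open>Counting index triples\<close>

lemma card_distinct_triples:
  fixes P :: "nat \<Rightarrow> nat \<Rightarrow> nat \<Rightarrow> bool"
  assumes swap12: "\<And>i j k. P i j k = P j i k" and swap23: "\<And>i j k. P i j k = P i k j"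
  shows "card {(i,j,k). i < m \<and> j < m \<and> k < m \<and> i \<noteq> j \<and> i \<noteq> k \<and> j \<noteq> k \<and> P i j k}
       = 6 * card {(i,j,k). i < j \<and> j < k \<and> k < m \<and> P i j k}"
proof -
  let ?I = "{(i,j,k). i < j \<and> j < k \<and> k < m \<and> P i j k}"
  define \<sigma> :: "nat \<Rightarrow> nat \<times> nat \<times> nat \<Rightarrow> nat \<times> nat \<times> nat" where
    "\<sigma> r = (\<lambda>(i,j,k). [(i,j,k), (i,k,j), (j,i,k), (j,k,i), (k,i,j), (k,j,i)] ! r)" for r
  have P: "P i j k = P i k j" "P i j k = P j i k" "P i j k = P j k i" "P i j k = P k i j" "P i j k = P k j i"
    for i j k using swap12 swap23 by metis+
  have "{(i,j,k). i < m \<and> j < m \<and> k < m \<and> i \<noteq> j \<and> i \<noteq> k \<and> j \<noteq> k \<and> P i j k}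
      = (\<Union>r<6. \<sigma> r ` ?I)"
  proof (intro equalityI subsetI)
    fix x assume "x \<in> {(i,j,k). i < m \<and> j < m \<and> k < m \<and> i \<noteq> j \<and> i \<noteq> k \<and> j \<noteq> k \<and> P i j k}"
    then obtain i j k where x: "x = (i,j,k)" "i < m" "j < m" "k < m" "i \<noteq> j" "i \<noteq> k" "j \<noteq> k" "P i j k"
      by auto
    consider "i < j" "j < k" | "i < k" "k < j" | "j < i" "i < k" | "k < i" "i < j"| "j < k" "k < i"
      | "k < j" "j < i"
      using x by (metis linorder_neqE_nat)
    then show "x \<in> (\<Union>r<6. \<sigma> r ` ?I)"
    proof cases
      case 1 then show ?thesis using x by (intro UN_I[of 0]) (auto simp: \<sigma>_def)
    next
      case 2 then show ?thesis using x P by (intro UN_I[of 1] image_eqI[of _ _ "(i,k,j)"]) (auto simp: \<sigma>_def)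
    next
      case 3 then show ?thesis using x P by (intro UN_I[of 2] image_eqI[of _ _ "(j,i,k)"]) (auto simp: \<sigma>_def)
    next
      case 4 then show ?thesis using x P by (intro UN_I[of 3] image_eqI[of _ _ "(k,i,j)"]) (auto simp: \<sigma>_def)
    next
      case 5 then show ?thesis using x P by (intro UN_I[of 4] image_eqI[of _ _ "(j,k,i)"]) (auto simp: \<sigma>_def)
    next
      case 6 then show ?thesis using x P by (intro UN_I[of 5] image_eqI[of _ _ "(k,j,i)"]) (auto simp: \<sigma>_def)
    qed
  next
    fix x assume "x \<in> (\<Union>r<6. \<sigma> r ` ?I)"
    then obtain r i j k where "r < 6" "(i,j,k) \<in> ?I" "x = \<sigma> r (i,j,k)" by auto
    then show "x \<in> {(i,j,k). i < m \<and> j < m \<and> k < m \<and> i \<noteq> j \<and> i \<noteq> k \<and> j \<noteq> k \<and> P i j k}"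
      using P by (auto simp: \<sigma>_def numeral_eq_Suc less_Suc_eq)
  qed
  moreover have "finite ?I"
    by (rule finite_subset[of _ "{..<m} \<times> {..<m} \<times> {..<m}"]) auto
  moreover have "inj_on (\<sigma> r) ?I" if "r < 6" for r
    using that by (auto simp: \<sigma>_def inj_on_def numeral_eq_Suc less_Suc_eq)
  moreover have "\<sigma> r ` ?I \<inter> \<sigma> r' ` ?I = {}" if "r < 6" "r' < 6" "r \<noteq> r'" for r r'
    using that by (auto simp: \<sigma>_def numeral_eq_Suc less_Suc_eq)
  ultimately show ?thesis
    by (simp add: card_UN_disjoint card_image)
qed

lemma card_nth_eq: "card {t. t < length xs \<and> xs ! t = v} = count (mset xs) v"
  by (simp add: count_mset count_list_eq_length_filter length_filter_conv_card eq_commute)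

lemma mset_nth3_subseteq:
  assumes "i < length xs" "j < length xs" "k < length xs" "i \<noteq> j" "i \<noteq> k" "j \<noteq> k"
  shows "{#xs ! i, xs ! j, xs ! k#} \<subseteq># mset xs"
  unfolding subseteq_mset_def
proof
  fix v
  have "count {#xs ! i, xs ! j, xs ! k#} v = card ({i, j, k} \<inter> {t. t < length xs \<and> xs ! t = v})"
    using assms by (auto simp: Int_insert_left card_insert_if)
  also have "\<dots> \<le> card {t. t < length xs \<and> xs ! t = v}"
    by (rule card_mono) auto
  finally show "count {#xs ! i, xs ! j, xs ! k#} v \<le> count (mset xs) v"
    by (simp add: card_nth_eq)
qed

lemma card_distinct_index_triples:
  "card {(i,j,k). i < length xs \<and> j < length xs \<and> k < length xs \<and> i \<noteq> j \<and> i \<noteq> k \<and> j \<noteq> k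
      \<and> xs ! i = p \<and> xs ! j = q \<and> xs ! k = r}
   = count (mset xs) p * count (mset xs - {#p#}) q * count (mset xs - {#p#} - {#q#}) r"
proof -
  define I where "I v = {t. t < length xs \<and> xs ! t = v}" for v
  have card_I: "card (I v) = count (mset xs) v" for v
    unfolding I_def by (rule card_nth_eq)
  have "{(i,j,k). i < length xs \<and> j < length xs \<and> k < length xs \<and> i \<noteq> j \<and> i \<noteq> k \<and> j \<noteq> k
      \<and> xs ! i = p \<and> xs ! j = q \<and> xs ! k = r} = (SIGMA i:I p. SIGMA j:I q - {i}. I r - {i, j})"
    unfolding I_def by auto
  moreover have "card (I q - {i}) = count (mset xs - {#p#}) q" if "i \<in> I p" for i
    using that card_I[of q] by (auto simp: I_def card_Diff_singleton_if)
  moreover have "card (I r - {i, j}) = count (mset xs - {#p#} - {#q#}) r"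
    if "i \<in> I p" "j \<in> I q - {i}" for i j
  proof -
    have "I r \<inter> {i, j} = (if p = r then {i} else {}) \<union> (if q = r then {j} else {})"
      using that unfolding I_def by auto
    then have "card (I r \<inter> {i, j}) = (if p = r then 1 else 0) + (if q = r then 1 else 0)"
      using that by auto
    then show ?thesis
      using card_Diff_subset_Int[of "I r" "{i, j}"] card_I[of r] by (auto simp: I_def)
  qed
  ultimately show ?thesis
    by (simp add: card_SigmaI I_def card_I[unfolded I_def])
qed

definition mult_factorial :: "'a multiset \<Rightarrow> nat" where
  "mult_factorial M = (\<Prod>x\<in>set_mset M. fact (count M x))"

lemma mult_factorial_pos: "mult_factorial M > 0"
  unfolding mult_factorial_def by (simp add: prod_pos)

lemma mult_factorial_add_mset: "mult_factorial (add_mset x M) = count (add_mset x M) x * mult_factorial M"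
proof -
  have "(\<Prod>v\<in>set_mset M - {x}. fact (count (add_mset x M) v)) = (\<Prod>v\<in>set_mset M - {x}. fact (count M v))"
    by (intro prod.cong) auto
  then show ?thesis
    unfolding mult_factorial_def
    by (cases "x \<in># M") (simp_all add: prod.remove insert_absorb not_in_iff algebra_simps)
qed

lemma mult_factorial_remove: "x \<in># M \<Longrightarrow> mult_factorial M = count M x * mult_factorial (M - {#x#})"
  using mult_factorial_add_mset[of x "M - {#x#}"] by (simp add: insert_DiffM)

lemma mult_factorial_remove3:
  assumes "{#p, q, r#} \<subseteq># M"
  shows "mult_factorial M
       = count M p * count (M - {#p#}) q * count (M - {#p#} - {#q#}) r * mult_factorial (M - {#p, q, r#})"
proof -
  have "p \<in># M" "q \<in># M - {#p#}" "r \<in># M - {#p#} - {#q#}"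
    using assms by (auto simp: insert_subset_eq_iff)
  then have "mult_factorial M = count M p * count (M - {#p#}) q * count (M - {#p#} - {#q#}) r
      * mult_factorial (M - {#p#} - {#q#} - {#r#})"
    by (simp only: mult_factorial_remove[of p] mult_factorial_remove[of q] mult_factorial_remove[of r]
        mult.assoc)
  moreover have "M - {#p#} - {#q#} - {#r#} = M - {#p, q, r#}"
    by (rule multiset_eqI) (simp add: diff_diff_left)
  ultimately show ?thesis
    by simp
qed

section \<open>The coalescence and fragmentation kernels at a merger\<close>

lemma sum_pairs_affine:
  fixes f :: "nat \<Rightarrow> real"
  shows "(\<Sum>(i,j) \<in> {(i,j). i < j \<and> j < m}. f i + f j + c)
      = (real m - 1) * (\<Sum>i<m. f i) + c * (real m * (real m - 1) / 2)"
proof (induction m)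
  case (Suc m)
  have split: "{(i,j). i < j \<and> j < Suc m} = {(i,j). i < j \<and> j < m} \<union> (\<lambda>i. (i, m)) ` {..<m}"
    by auto
  have "finite {(i,j). i < j \<and> j < m}"
    by (rule finite_subset[of _ "{..<m} \<times> {..<m}"]) auto
  then have "(\<Sum>(i,j) \<in> {(i,j). i < j \<and> j < Suc m}. f i + f j + c)
      = (\<Sum>(i,j) \<in> {(i,j). i < j \<and> j < m}. f i + f j + c) + (\<Sum>i<m. f i + f m + c)"
    unfolding split by (subst sum.union_disjoint) (auto simp: sum.reindex inj_on_def)
  then show ?case
    using Suc.IH by (simp add: sum.distrib field_simps)
qed simp

lemma sum_triples_affine:
  fixes f :: "nat \<Rightarrow> real"
  shows "(\<Sum>(i,j,k) \<in> {(i,j,k). i < j \<and> j < k \<and> k < m}. f i + f j + f k + c)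
      = (real m - 1) * (real m - 2) / 2 * (\<Sum>i<m. f i) + c * (real m * (real m - 1) * (real m - 2) / 6)"
proof (induction m)
  case (Suc m)
  have split: "{(i,j,k). i < j \<and> j < k \<and> k < Suc m}
      = {(i,j,k). i < j \<and> j < k \<and> k < m} \<union> (\<lambda>(i,j). (i, j, m)) ` {(i,j). i < j \<and> j < m}"
    by (auto simp: image_iff less_Suc_eq)
  have "finite {(i,j,k). i < j \<and> j < k \<and> k < m}"
    by (rule finite_subset[of _ "{..<m} \<times> {..<m} \<times> {..<m}"]) auto
  moreover have "finite {(i,j). i < j \<and> j < m}"
    by (rule finite_subset[of _ "{..<m} \<times> {..<m}"]) auto
  ultimately have eq: "(\<Sum>(i,j,k) \<in> {(i,j,k). i < j \<and> j < k \<and> k < Suc m}. f i + f j + f k + c)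
      = (\<Sum>(i,j,k) \<in> {(i,j,k). i < j \<and> j < k \<and> k < m}. f i + f j + f k + c)
        + (\<Sum>(i,j) \<in> {(i,j). i < j \<and> j < m}. f i + f j + (f m + c))"
    unfolding split by (subst sum.union_disjoint) (auto simp: sum.reindex inj_on_def split_def add.assoc)
  show ?case
    unfolding eq sum_pairs_affine Suc.IH by (simp add: algebra_simps add_divide_distrib diff_divide_distrib)
qed simp

lemma mset_ranked [simp]: "mset (ranked M) = M"
  by (simp add: ranked_def)

lemma length_ranked [simp]: "length (ranked M) = size M"
  by (metis mset_ranked size_mset)

lemma coal_total_rate_eq:
  "coal_total_rate M = (real (size M) - 1) * (real (size M) - 2) * (real (sum_mset M) + real (size M)) / 2"
proof -
  let ?xs = "ranked M"
  have "coal_total_rate M = (\<Sum>(i,j,k) \<in> {(i,j,k). i < j \<and> j < k \<and> k < size M}.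
          real (?xs ! i) + real (?xs ! j) + real (?xs ! k) + 3)"
    unfolding coal_total_rate_def Let_def by (intro sum.cong) auto
  also have "\<dots> = (real (size M) - 1) * (real (size M) - 2) / 2 * (\<Sum>i<size M. real (?xs ! i))
      + 3 * (real (size M) * (real (size M) - 1) * (real (size M) - 2) / 6)"
    by (rule sum_triples_affine)
  also have "(\<Sum>i<size M. real (?xs ! i)) = real (sum_mset M)"
    by (metis length_ranked lessThan_atLeast0 mset_ranked of_nat_sum sum_list_sum_nth sum_mset_sum_list)
  finally show ?thesis
    by (simp add: field_simps)
qed

lemma add_mset_eq_if_diff_add_eq:
  assumes "A \<subseteq># M" "B \<subseteq># M" and eq: "M - A + {#x#} = M - B + {#y#}"
  shows "add_mset x B = add_mset y A"
proof (rule multiset_eqI)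
  fix v
  have "count A v \<le> count M v" "count B v \<le> count M v"
    using assms by (auto intro: mset_subset_eq_count)
  moreover have "count (M - A + {#x#}) v = count (M - B + {#y#}) v"
    using eq by simp
  ultimately show "count (add_mset x B) v = count (add_mset y A) v"
    by auto
qed

lemma coalesced_triple_unique:
  fixes M :: "nat multiset"
  assumes pos: "\<forall>x\<in>#M. x > 0"
    and sub: "{#a, b, c#} \<subseteq># M" "{#p, q, r#} \<subseteq># M"
    and eq: "M - {#a, b, c#} + {#a + b + c#} = M - {#p, q, r#} + {#p + q + r#}"
  shows "{#a, b, c#} = {#p, q, r#}"
proof -
  have E: "add_mset (a + b + c) {#p, q, r#} = add_mset (p + q + r) {#a, b, c#}"
    using add_mset_eq_if_diff_add_eq[OF sub eq] .
  have "p > 0" "q > 0" "r > 0"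
    using sub pos by (auto dest: mset_subset_eqD)
  then have "p + q + r \<notin># {#p, q, r#}"
    by auto
  then have "a + b + c = p + q + r"
    using E by (metis insert_noteq_member)
  then show ?thesis
    using E by simp
qed

definition index_triples :: "nat multiset \<Rightarrow> nat multiset \<Rightarrow> (nat \<times> nat \<times> nat) set" where
  "index_triples M T =
     {(i,j,k). i < j \<and> j < k \<and> k < size M \<and> {#ranked M ! i, ranked M ! j, ranked M ! k#} = T}"

lemma coal_rate_coalesce:
  fixes M :: "nat multiset"
  assumes pos: "\<forall>x\<in>#M. x > 0" and sub: "{#a, b, c#} \<subseteq># M"
  shows "coal_rate M (M - {#a, b, c#} + {#a + b + c#}) = real (a + b + c + 3) * card (index_triples M {#a, b, c#})"
proof -
  let ?xs = "ranked M"
  have sum_eq: "?xs ! i + ?xs ! j + ?xs ! k = a + b + c"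
    if "{#?xs ! i, ?xs ! j, ?xs ! k#} = {#a, b, c#}" for i j k
    using arg_cong[OF that, of sum_mset] by (simp add: add.assoc)
  have "coalesce ?xs i j k = M - {#a, b, c#} + {#a + b + c#} \<longleftrightarrow> {#?xs ! i, ?xs ! j, ?xs ! k#} = {#a, b, c#}"
    if "i < j" "j < k" "k < size M" for i j k
  proof
    assume "coalesce ?xs i j k = M - {#a, b, c#} + {#a + b + c#}"
    then have "M - {#?xs ! i, ?xs ! j, ?xs ! k#} + {#?xs ! i + ?xs ! j + ?xs ! k#}
        = M - {#a, b, c#} + {#a + b + c#}"
      by (simp add: coalesce_def)
    moreover have "{#?xs ! i, ?xs ! j, ?xs ! k#} \<subseteq># M"
      using mset_nth3_subseteq[of i ?xs j k] that by simp
    ultimately show "{#?xs ! i, ?xs ! j, ?xs ! k#} = {#a, b, c#}"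
      using coalesced_triple_unique[OF pos] sub by blast
  qed (simp add: coalesce_def sum_eq)
  then have "{(i,j,k). i < j \<and> j < k \<and> k < size M \<and> coalesce ?xs i j k = M - {#a, b, c#} + {#a + b + c#}}
      = index_triples M {#a, b, c#}"
    unfolding index_triples_def by auto
  then have "coal_rate M (M - {#a, b, c#} + {#a + b + c#})
      = (\<Sum>(i,j,k) \<in> index_triples M {#a, b, c#}. real (?xs ! i + ?xs ! j + ?xs ! k + 3))"
    unfolding coal_rate_def Let_def by simp
  also have "\<dots> = (\<Sum>_ \<in> index_triples M {#a, b, c#}. real (a + b + c + 3))"
    by (rule sum.cong) (auto simp: index_triples_def sum_eq simp del: of_nat_add)
  finally show ?thesis
    by simp
qed

definition ordered_splits :: "nat \<Rightarrow> nat multiset \<Rightarrow> (nat \<times> nat \<times> nat) set" where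
  "ordered_splits y T = {(p,q,r). p \<le> y \<and> q \<le> y \<and> r \<le> y \<and> p + q + r = y \<and> mset [p, q, r] = T}"

lemma finite_ordered_splits: "finite (ordered_splits y T)"
  unfolding ordered_splits_def by (rule finite_subset[of _ "{..y} \<times> {..y} \<times> {..y}"]) auto

lemma mu_eq:
  "mu (a + b + c) {#a, b, c#}
     = card (ordered_splits (a + b + c) {#a, b, c#}) * (hit_prob a * hit_prob b * hit_prob c)
       / hit_prob3 (a + b + c)"
proof -
  have "(\<Sum>(p,q,r) \<in> ordered_splits (a + b + c) {#a, b, c#}. hit_prob p * hit_prob q * hit_prob r)
      = (\<Sum>_ \<in> ordered_splits (a + b + c) {#a, b, c#}. hit_prob a * hit_prob b * hit_prob c)"
  proof (rule sum.cong[OF refl], clarify)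
    fix p q r assume "(p, q, r) \<in> ordered_splits (a + b + c) {#a, b, c#}"
    then have "{#p, q, r#} = {#a, b, c#}"
      by (simp add: ordered_splits_def)
    from arg_cong[OF this, of "\<lambda>T. prod_mset (image_mset hit_prob T)"]
    show "hit_prob p * hit_prob q * hit_prob r = hit_prob a * hit_prob b * hit_prob c"
      by (simp add: mult.assoc)
  qed
  then show ?thesis
    unfolding mu_def hit_prob3_def ordered_splits_def[symmetric] by simp
qed

text \<open>Both sides count the ordered triples of distinct positions of \<open>ranked M\<close> carrying the
  values \<open>a, b, c\<close> in some order: first by the unordered index triple and its \<open>3!\<close> orderings,
  then by the ordered value triple and the choices of positions for each value.\<close>

lemma card_index_triples:
  fixes M :: "nat multiset"
  assumes sub: "{#a, b, c#} \<subseteq># M"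
  shows "6 * card (index_triples M {#a, b, c#}) * mult_factorial (M - {#a, b, c#})
       = card (ordered_splits (a + b + c) {#a, b, c#}) * mult_factorial M"
proof -
  let ?T = "{#a, b, c#}"
  let ?xs = "ranked M"
  let ?m = "size M"
  define E where "E = (\<lambda>(p,q,r). {(i,j,k). i < ?m \<and> j < ?m \<and> k < ?m \<and> i \<noteq> j \<and> i \<noteq> k \<and> j \<noteq> k
      \<and> ?xs ! i = p \<and> ?xs ! j = q \<and> ?xs ! k = r})"
  let ?D = "{(i,j,k). i < ?m \<and> j < ?m \<and> k < ?m \<and> i \<noteq> j \<and> i \<noteq> k \<and> j \<noteq> k
      \<and> {#?xs ! i, ?xs ! j, ?xs ! k#} = ?T}"
  have "card ?D = 6 * card (index_triples M ?T)"
    unfolding index_triples_def by (rule card_distinct_triples) (auto simp: add_mset_commute)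
  moreover have "?D = (\<Union>x \<in> ordered_splits (a + b + c) ?T. E x)"
  proof (intro equalityI subsetI)
    fix x assume "x \<in> ?D"
    then obtain i j k where x: "x = (i,j,k)" "i < ?m" "j < ?m" "k < ?m" "i \<noteq> j" "i \<noteq> k" "j \<noteq> k"
      "{#?xs ! i, ?xs ! j, ?xs ! k#} = ?T" by auto
    have "?xs ! i + ?xs ! j + ?xs ! k = a + b + c"
      using arg_cong[OF x(8), of sum_mset] by (simp add: add.assoc)
    then have "(?xs ! i, ?xs ! j, ?xs ! k) \<in> ordered_splits (a + b + c) ?T"
      unfolding ordered_splits_def using x(8) by auto
    moreover have "x \<in> E (?xs ! i, ?xs ! j, ?xs ! k)"
      unfolding E_def using x by auto
    ultimately show "x \<in> (\<Union>x \<in> ordered_splits (a + b + c) ?T. E x)" by blast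
  qed (auto simp: E_def ordered_splits_def)
  moreover have "finite (E x)" for x
    unfolding E_def by (cases x) (auto intro: finite_subset[of _ "{..<?m} \<times> {..<?m} \<times> {..<?m}"])
  moreover have "E x \<inter> E z = {}" if "x \<noteq> z" for x z
    using that unfolding E_def by (cases x, cases z) auto
  ultimately have "6 * card (index_triples M ?T) = (\<Sum>x \<in> ordered_splits (a + b + c) ?T. card (E x))"
    by (simp add: card_UN_disjoint finite_ordered_splits)
  moreover have "card (E x) * mult_factorial (M - ?T) = mult_factorial M"
    if "x \<in> ordered_splits (a + b + c) ?T" for x
  proof -
    obtain p q r where x: "x = (p, q, r)" by (cases x)
    then have "{#p, q, r#} = ?T"
      using that by (simp add: ordered_splits_def)
    then show ?thesis
      using card_distinct_index_triples[of ?xs p q r] mult_factorial_remove3[of p q r M] sub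
      by (simp add: x E_def)
  qed
  ultimately show ?thesis
    by (simp add: sum_distrib_right)
qed

lemma coal_kernel_neq_0_imp:
  assumes "coal_kernel M M' \<noteq> 0"
  obtains a b c where "{#a, b, c#} \<subseteq># M" "M' = M - {#a, b, c#} + {#a + b + c#}"
proof -
  let ?xs = "ranked M"
  have "coal_rate M M' \<noteq> 0"
    using assms by (auto simp: coal_kernel_def)
  then obtain i j k where "i < j" "j < k" "k < size M" "coalesce ?xs i j k = M'"
    unfolding coal_rate_def Let_def by (auto elim: sum.not_neutral_contains_not_neutral)
  then show ?thesis
    using that[of "?xs ! i" "?xs ! j" "?xs ! k"] mset_nth3_subseteq[of i ?xs j k]
    by (simp add: coalesce_def)
qed

lemma frag_kernel_neq_0_imp:
  assumes "frag_kernel n l M' M \<noteq> 0"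
  obtains a b c where "odd a" "odd b" "odd c" "{#a, b, c#} \<subseteq># M" "M' = M - {#a, b, c#} + {#a + b + c#}"
proof -
  let ?ys = "ranked M'"
  obtain i where i: "i < size M'"
    and "(\<Sum>R \<in> {R. M' - {#?ys ! i#} + R = M}. mu (?ys ! i) R) \<noteq> 0"
    using assms unfolding frag_kernel_def Let_def
    by (auto elim: sum.not_neutral_contains_not_neutral)
  then obtain R where R: "M' - {#?ys ! i#} + R = M" and "mu (?ys ! i) R \<noteq> 0"
    by (auto elim: sum.not_neutral_contains_not_neutral)
  then obtain a b c where abc: "a + b + c = ?ys ! i" "mset [a, b, c] = R"
    and "hit_prob a * hit_prob b * hit_prob c \<noteq> 0"
    unfolding mu_def by (auto elim: sum.not_neutral_contains_not_neutral)
  then have "odd a" "odd b" "odd c"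
    using hit_prob_neq_0_imp_odd by auto
  moreover have "?ys ! i \<in># M'"
    using i by (metis length_ranked mset_ranked nth_mem set_mset_mset)
  ultimately show ?thesis
    using that[of a b c] R abc by auto
qed

lemma frag_kernel_coalesced:
  fixes M :: "nat multiset"
  assumes sub: "{#a, b, c#} \<subseteq># M" and pos: "a > 0" "b > 0" "c > 0"
  defines "M' \<equiv> M - {#a, b, c#} + {#a + b + c#}"
  shows "frag_kernel n l M' M
       = count M' (a + b + c) * ((real (a + b + c) - 1) / (2 * real (n - l))) * mu (a + b + c) {#a, b, c#}"
proof -
  let ?T = "{#a, b, c#}" and ?y = "a + b + c"
  let ?ys = "ranked M'"
  have split_iff: "M' - {#v#} + R = M \<longleftrightarrow> v = ?y \<and> R = ?T" if "v \<in># M'" for v R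
  proof
    assume eq: "M' - {#v#} + R = M"
    have "count M' ?y = count (M - ?T) ?y + 1" "count ?T ?y = 0"
      using pos by (auto simp: M'_def)
    then have "v = ?y"
      using arg_cong[OF eq, of "\<lambda>N. count N ?y"] by (auto split: if_splits)
    moreover have "M' - {#v#} = M - ?T"
      using \<open>v = ?y\<close> by (simp add: M'_def)
    then have "M - ?T + R = M - ?T + ?T"
      using eq subset_mset.diff_add[OF sub] by simp
    ultimately show "v = ?y \<and> R = ?T"
      by simp
  qed (use subset_mset.diff_add[OF sub] in \<open>auto simp: M'_def\<close>)
  have "frag_kernel n l M' M
      = (\<Sum>i < size M'. if ?ys ! i = ?y then (real ?y - 1) / (2 * real (n - l)) * mu ?y ?T else 0)"
    unfolding frag_kernel_def Let_def
    by (intro sum.cong refl) (auto simp: split_iff[OF nth_mem_mset[of _ ?ys, simplified]])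
  also have "\<dots> = real (card {i. i < length ?ys \<and> ?ys ! i = ?y}) * ((real ?y - 1) / (2 * real (n - l)) * mu ?y ?T)"
    by (simp add: sum.If_cases Int_def conj_commute)
  finally show ?thesis
    using card_nth_eq[of ?ys ?y] by (simp only: mset_ranked mult.assoc)
qed

section \<open>Detailed balance\<close>

definition admissible :: "nat \<Rightarrow> nat \<Rightarrow> nat multiset \<Rightarrow> bool" where
  "admissible n k M \<longleftrightarrow> size M = 2 * (n - k) + 1 \<and> sum_mset M = 2 * n + 1 \<and> (\<forall>x\<in>#M. odd x)"

definition hit_weight :: "nat multiset \<Rightarrow> real" where
  "hit_weight M = (\<Prod>x\<in>#M. hit_prob x)"

definition total_rate :: "nat \<Rightarrow> nat \<Rightarrow> nat" where
  "total_rate n k = 2 * (n - k) * (2 * (n - k) - 1) * (2 * n + 1 - k)"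

definition marginal_const :: "nat \<Rightarrow> nat \<Rightarrow> real" where
  "marginal_const n k = fact (2 * n + 1) * 2 ^ (2 * n + 1) * (\<Prod>i<k. real (Suc i) / total_rate n i)"

text \<open>The law of \<open>\<X>'\<^sub>k\<close>: proportional to \<open>\<Prod>\<^sub>i P(H\<^sub>-\<^sub>1 = s\<^sub>i) / \<Prod>\<^sub>v (mult\<^sub>v s)!\<close> on the
  states reachable in \<open>k\<close> steps. The proof only uses its values at \<open>k = 0\<close> and \<open>k = n\<close> and
  detailed balance between consecutive times.\<close>

definition marginal :: "nat \<Rightarrow> nat \<Rightarrow> nat multiset \<Rightarrow> real" where
  "marginal n k M = (if admissible n k M then marginal_const n k * hit_weight M / mult_factorial M else 0)"

lemma coal_total_rate_admissible:
  assumes "admissible n k M"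
  shows "coal_total_rate M = total_rate n k"
proof (cases "k < n")
  case True
  then show ?thesis
    using assms unfolding coal_total_rate_eq admissible_def total_rate_def
    by (simp add: field_simps)
qed (use assms in \<open>simp add: coal_total_rate_eq admissible_def total_rate_def\<close>)

lemma admissible_coalesce_iff:
  fixes M :: "nat multiset"
  assumes sub: "{#a, b, c#} \<subseteq># M" and odd: "odd a" "odd b" "odd c" and k: "k < n"
  shows "admissible n (Suc k) (M - {#a, b, c#} + {#a + b + c#}) \<longleftrightarrow> admissible n k M"
proof -
  define R where "R = M - {#a, b, c#}"
  have "M = R + {#a, b, c#}"
    unfolding R_def using subset_mset.diff_add[OF sub] ..
  moreover have "2 * (n - k) = Suc (Suc (2 * (n - Suc k)))"
    using k by simp
  ultimately show ?thesis
    using odd unfolding R_def[symmetric] by (simp add: admissible_def add.assoc)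
qed

lemma hit_weight_union: "hit_weight (M + N) = hit_weight M * hit_weight N"
  by (simp add: hit_weight_def)

lemma total_rate_pos: "k < n \<Longrightarrow> total_rate n k > 0"
  by (simp add: total_rate_def)

lemma detailed_balance_coalesce:
  fixes M :: "nat multiset"
  assumes k: "k < n" and adm: "admissible n k M" and sub: "{#a, b, c#} \<subseteq># M"
  defines "M' \<equiv> M - {#a, b, c#} + {#a + b + c#}"
  shows "marginal n k M * coal_kernel M M' = marginal n (Suc k) M' * frag_kernel n (n - Suc k) M' M"
proof -
  let ?T = "{#a, b, c#}" and ?y = "a + b + c"
  define hT where "hT = hit_prob a * hit_prob b * hit_prob c"
  define I S where "I = real (card (index_triples M ?T))" and "S = real (card (ordered_splits ?y ?T))"
  define C Q where "C = marginal_const n k" and "Q = real (total_rate n k)"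
  define D D' where "D = real (mult_factorial M)" and "D' = real (mult_factorial (M - ?T))"
  define H where "H = hit_weight (M - ?T)"
  have odd: "odd a" "odd b" "odd c"
    using adm sub by (auto simp: admissible_def dest: mset_subset_eqD)
  then have "\<forall>x\<in>#M. x > 0" "a > 0" "b > 0" "c > 0"
    using adm by (auto simp: admissible_def intro: odd_pos)
  note pos = this
  have "?y = 3 + 2 * ((?y - 3) div 2)"
    using odd pos by presburger
  then obtain j where y: "?y = 3 + 2 * j" by blast
  have adm': "admissible n (Suc k) M'"
    using admissible_coalesce_iff[OF sub odd k] adm by (simp add: M'_def)
  have "hit_weight M = hit_weight (M - ?T + ?T)"
    using subset_mset.diff_add[OF sub] by simp
  also have "\<dots> = H * hT"
    unfolding hit_weight_union by (simp add: H_def hT_def hit_weight_def mult.assoc)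
  finally have marg: "marginal n k M = C * H * hT / D"
    using adm by (simp add: marginal_def C_def D_def)
  have coal: "coal_kernel M M' = (real ?y + 3) * I / Q"
    using coal_rate_coalesce[OF pos(1) sub] coal_total_rate_admissible[OF adm]
    by (simp add: coal_kernel_def M'_def I_def Q_def)
  have "hit_weight M' = H * hit_prob ?y"
    by (simp add: M'_def H_def hit_weight_def)
  moreover have M': "M' = add_mset ?y (M - ?T)"
    by (simp add: M'_def)
  then have "real (mult_factorial M') = D' * count M' ?y"
    unfolding D'_def by (simp only: mult_factorial_add_mset of_nat_mult mult.commute)
  moreover have "marginal_const n (Suc k) = C * real (Suc k) / Q"
    by (simp add: marginal_const_def C_def Q_def)
  ultimately have marg': "marginal n (Suc k) M' = C * real (Suc k) / Q * (H * hit_prob ?y) / (D' * count M' ?y)"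
    using adm' by (simp add: marginal_def)
  have frag: "frag_kernel n (n - Suc k) M' M
      = count M' ?y * ((real ?y - 1) / (2 * real (Suc k))) * (S * hT / hit_prob3 ?y)"
    using frag_kernel_coalesced[OF sub pos(2-4), of n "n - Suc k"] mu_eq[of a b c] k
    by (simp add: M'_def S_def hT_def Suc_diff_Suc)
  have "count M' ?y > 0" "D > 0" "D' > 0" "Q > 0" "hit_prob3 ?y > 0"
    using mult_factorial_pos total_rate_pos[OF k] hit_prob3_pos[OF y]
    by (simp_all add: M' D_def D'_def Q_def)
  note positive = this
  have "6 * I * D' = S * D"
    using arg_cong[OF card_index_triples[OF sub], of real] unfolding I_def S_def D_def D'_def
    by simp
  then have splits: "S / (2 * D') = 3 * I / D"
    using positive by (simp add: field_simps)
  have "(real ?y + 3) * hit_prob3 ?y = 3 * (real ?y - 1) * hit_prob ?y"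
    using hit_prob3_hit_prob[OF y] by simp
  then have hit: "(real ?y - 1) * hit_prob ?y / hit_prob3 ?y = (real ?y + 3) / 3"
    using positive by (simp add: field_simps)
  have cancel: "C * K / Q * (H * h) / (D' * m) * (m * ((Y - 1) / (2 * K)) * (S * hT / W))
      = C * H * hT / Q * ((Y - 1) * h / W) * (S / (2 * D'))" if "m > 0" "K > 0" "W > 0" for m K Y h W :: real
    using that positive by (simp add: field_simps)
  have "marginal n (Suc k) M' * frag_kernel n (n - Suc k) M' M
      = C * H * hT / Q * ((real ?y - 1) * hit_prob ?y / hit_prob3 ?y) * (S / (2 * D'))"
    unfolding marg' frag using positive by (intro cancel) simp_all
  also have "\<dots> = marginal n k M * coal_kernel M M'"
    unfolding hit splits marg coal using positive by (simp add: field_simps)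
  finally show ?thesis ..
qed

lemma detailed_balance:
  assumes k: "k < n"
  shows "marginal n k M * coal_kernel M M' = marginal n (Suc k) M' * frag_kernel n (n - Suc k) M' M"
proof (cases "\<exists>a b c. odd a \<and> odd b \<and> odd c \<and> {#a, b, c#} \<subseteq># M \<and> M' = M - {#a, b, c#} + {#a + b + c#}")
  case True
  then obtain a b c where odd: "odd a" "odd b" "odd c" and sub: "{#a, b, c#} \<subseteq># M"
    and M': "M' = M - {#a, b, c#} + {#a + b + c#}"
    by blast
  show ?thesis
  proof (cases "admissible n k M")
    case True
    then show ?thesis
      unfolding M' by (rule detailed_balance_coalesce[OF k _ sub])
  next
    case False
    then have "\<not> admissible n (Suc k) M'"
      unfolding M' admissible_coalesce_iff[OF sub odd k] .
    then show ?thesis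
      using False by (simp add: marginal_def)
  qed
next
  case False
  have "frag_kernel n (n - Suc k) M' M = 0"
  proof (rule ccontr)
    assume "frag_kernel n (n - Suc k) M' M \<noteq> 0"
    then obtain a b c where "odd a" "odd b" "odd c" "{#a, b, c#} \<subseteq># M"
      "M' = M - {#a, b, c#} + {#a + b + c#}"
      by (rule frag_kernel_neq_0_imp)
    then show False
      using False by blast
  qed
  moreover have "coal_kernel M M' = 0" if "admissible n k M"
  proof (rule ccontr)
    assume "coal_kernel M M' \<noteq> 0"
    then obtain a b c where "{#a, b, c#} \<subseteq># M" "M' = M - {#a, b, c#} + {#a + b + c#}"
      by (rule coal_kernel_neq_0_imp)
    moreover have "odd a" "odd b" "odd c"
      using that calculation by (auto simp: admissible_def dest: mset_subset_eqD)
    ultimately show False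
      using False by blast
  qed
  ultimately show ?thesis
    by (auto simp: marginal_def)
qed

lemma sum_mset_eq_size_plus:
  "(\<forall>x\<in>#M. x \<ge> 1) \<Longrightarrow> sum_mset M = size M + (\<Sum>x\<in>#M. x - 1 :: nat)"
  by (induction M) auto

lemma admissible_0_iff: "admissible n 0 M \<longleftrightarrow> M = replicate_mset (2 * n + 1) 1"
proof
  assume "admissible n 0 M"
  then have size: "size M = 2 * n + 1" and sum: "sum_mset M = 2 * n + 1" and "\<forall>x\<in>#M. odd x"
    by (auto simp: admissible_def)
  then have ge: "\<forall>x\<in>#M. x \<ge> 1"
    by (auto simp: Suc_le_eq odd_pos)
  then have "(\<Sum>x\<in>#M. x - 1 :: nat) = 0"
    using sum_mset_eq_size_plus[OF ge] size sum by simp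
  then have "set_mset M \<subseteq> {1}"
    using ge by force
  then have "M = replicate_mset (size M) 1"
    by (rule set_mset_subset_singletonD)
  then show "M = replicate_mset (2 * n + 1) 1"
    using size by simp
qed (simp add: admissible_def)

lemma admissible_self_iff: "admissible n n M \<longleftrightarrow> M = {#2 * n + 1#}"
proof
  assume "admissible n n M"
  then have "size M = 1"
    by (simp add: admissible_def)
  then obtain x where "M = {#x#}"
    using size_1_singleton_mset by blast
  then show "M = {#2 * n + 1#}"
    using \<open>admissible n n M\<close> by (simp add: admissible_def)
qed (simp add: admissible_def)

lemma marginal_0: "marginal n 0 M = point_mass (replicate_mset (2 * n + 1) 1) M"
proof (cases "M = replicate_mset (2 * n + 1) 1")
  case True
  have "hit_weight M = (1 / 2) ^ (2 * n + 1)"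
    unfolding True hit_weight_def by (simp only: image_replicate_mset prod_mset_replicate_mset hit_prob_1)
  moreover have "real (mult_factorial M) = fact (2 * n + 1)"
    unfolding True mult_factorial_def by simp
  ultimately have "marginal n 0 M = fact (2 * n + 1) * 2 ^ (2 * n + 1) * (1 / 2) ^ (2 * n + 1) / fact (2 * n + 1)"
    using True admissible_0_iff[of n M] by (simp add: marginal_def marginal_const_def)
  also have "\<dots> = 1"
    by (simp add: power_one_over)
  finally show ?thesis
    using True by (simp add: point_mass_def)
qed (simp add: marginal_def point_mass_def admissible_0_iff)

lemma prod_double_fact: "(\<Prod>i<n. 2 * (n - i) * (2 * (n - i) - 1)) = (fact (2 * n) :: nat)"
proof (induction n)
  case (Suc n)
  have "(\<Prod>i<Suc n. 2 * (Suc n - i) * (2 * (Suc n - i) - 1))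
      = 2 * Suc n * (2 * n + 1) * (\<Prod>i<n. 2 * (Suc n - Suc i) * (2 * (Suc n - Suc i) - 1))"
    by (subst prod.lessThan_Suc_shift) simp
  also have "\<dots> = (2 * n + 2) * ((2 * n + 1) * fact (2 * n))"
    using Suc by (simp add: algebra_simps)
  also have "\<dots> = fact (2 * Suc n)"
    by (simp add: algebra_simps)
  finally show ?case .
qed simp

lemma fact_mult_prod_descending: "fact m * (\<Prod>i<n. m + n - i) = (fact (m + n) :: nat)"
proof (induction n)
  case (Suc n)
  have "(\<Prod>i<Suc n. m + Suc n - i) = (m + Suc n) * (\<Prod>i<n. m + Suc n - Suc i)"
    by (subst prod.lessThan_Suc_shift) simp
  then show ?case
    using Suc by (simp add: algebra_simps)
qed simp

lemma fact_mult_prod_total_rate: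
  "fact (n + 1) * (\<Prod>i<n. total_rate n i) = fact (2 * n) * fact (2 * n + 1)"
proof -
  have "(\<Prod>i<n. total_rate n i) = (\<Prod>i<n. 2 * (n - i) * (2 * (n - i) - 1)) * (\<Prod>i<n. (n + 1) + n - i)"
    unfolding total_rate_def prod.distrib[symmetric] by (intro prod.cong) auto
  moreover have "fact (n + 1) * (\<Prod>i<n. (n + 1) + n - i) = fact (2 * n + 1)"
    using fact_mult_prod_descending[of "n + 1" n] by (simp add: mult_2)
  ultimately show ?thesis
    unfolding prod_double_fact by (metis mult.left_commute)
qed

lemma marginal_const_self: "marginal_const n n * hit_prob (2 * n + 1) = 1"
proof -
  define N where "N = 2 * n + 1"
  have fact_N: "fact N = N * fact (2 * n)"
    by (simp add: N_def)
  have ballot: "N * first_passages 1 N = N choose n"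
    using first_passages_closed_form[of N 1 n] by (simp add: N_def)
  have binomial: "fact n * fact (n + 1) * (N choose n) = fact N"
    using binomial_fact_lemma[of n N] by (simp add: N_def)
  have "fact (n + 1) * (fact N * fact n * first_passages 1 N)
      = fact (2 * n) * (fact n * fact (n + 1) * (N * first_passages 1 N))"
    unfolding fact_N by (simp only: ac_simps)
  also have "\<dots> = fact (2 * n) * fact N"
    unfolding ballot binomial ..
  also have "\<dots> = fact (n + 1) * (\<Prod>i<n. total_rate n i)"
    unfolding N_def by (rule fact_mult_prod_total_rate[symmetric])
  finally have prod: "fact N * fact n * first_passages 1 N = (\<Prod>i<n. total_rate n i)"
    by (metis fact_nonzero mult_left_cancel)
  have "(\<Prod>i<n. real (Suc i)) = fact n"
    by (simp add: fact_prod_Suc atLeast0LessThan)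
  then have "marginal_const n n * hit_prob N = real (fact N * fact n * first_passages 1 N) / (\<Prod>i<n. total_rate n i)"
    unfolding marginal_const_def hit_prob_eq N_def[symmetric] prod_dividef by simp
  also have "\<dots> = 1"
    unfolding prod by (simp add: prod_pos total_rate_pos)
  finally show ?thesis
    by (simp add: N_def)
qed

lemma marginal_self: "marginal n n M = point_mass {#2 * n + 1#} M"
  using marginal_const_self[of n]
  by (auto simp: marginal_def point_mass_def admissible_self_iff hit_weight_def mult_factorial_def)

lemma marginal_path_balance:
  assumes "j \<le> n"
  shows "marginal n 0 (xs ! 0) * (\<Prod>k<j. coal_kernel (xs ! k) (xs ! Suc k))
       = marginal n j (xs ! j) * (\<Prod>k<j. frag_kernel n (n - Suc k) (xs ! Suc k) (xs ! k))"
  using assms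
proof (induction j)
  case (Suc j)
  then have "marginal n 0 (xs ! 0) * (\<Prod>k<Suc j. coal_kernel (xs ! k) (xs ! Suc k))
      = (\<Prod>k<j. frag_kernel n (n - Suc k) (xs ! Suc k) (xs ! k))
        * (marginal n j (xs ! j) * coal_kernel (xs ! j) (xs ! Suc j))"
    by (simp add: ac_simps)
  also have "marginal n j (xs ! j) * coal_kernel (xs ! j) (xs ! Suc j)
      = marginal n (Suc j) (xs ! Suc j) * frag_kernel n (n - Suc j) (xs ! Suc j) (xs ! j)"
    using Suc.prems by (intro detailed_balance) simp
  finally show ?case
    by (simp add: ac_simps)
qed simp

theorem theorem3p1:
  fixes n :: nat and xs :: "nat multiset list"
  assumes "length xs = n + 1"
  shows "markov_path_prob (point_mass (replicate_mset (2 * n + 1) 1)) (\<lambda>_. coal_kernel) xs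
       = markov_path_prob (point_mass {#2 * n + 1#}) (frag_kernel n) (rev xs)"
proof -
  have rev_xs_nth: "rev xs ! l = xs ! (n - l)" if "l \<le> n" for l
    using that assms by (simp add: rev_nth)
  have "(\<Prod>l<n. frag_kernel n l (rev xs ! l) (rev xs ! Suc l))
      = (\<Prod>k<n. frag_kernel n (n - Suc k) (xs ! Suc k) (xs ! k))"
    by (subst prod.nat_diff_reindex[symmetric]) (simp add: rev_xs_nth Suc_diff_Suc)
  then show ?thesis
    using marginal_path_balance[of n n xs] assms rev_xs_nth[of 0]
    by (simp add: markov_path_prob_def marginal_0 marginal_self)
qed

end
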